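(* For all complex $x,y$ with $|xy|<1$, $$\sum_{n=0}^{\infty} n!\,R_n(y)\,x^n=e^{y}\int_0^{y}\frac{e^{-t}}{1-xt}\,dt=e^{y}\sum_{n=0}^{\infty}d_n(x)\frac{y^{n+1}}{(n+1)!},$$ where the integral is along the segment from $0$ to $y$.
   Context: For an integer $n\ge 0$ and complex $y$, $R_n(y)=e^y-1-\frac{y}{1!}-\frac{y^2}{2!}-\dots-\frac{y^n}{n!}=e^y-\sum_{k=0}^n\frac{y^k}{k!}$. The derangement polynomials are $d_n(x)=(-1)^n\sum_{k=0}^{n}\binom{n}{k}(-1)^k k!\,x^k=n!\sum_{j=0}^{n}\frac{(-1)^j}{j!}x^{n-j}$, $n\ge 0$. *)

theory Defs
  imports "HOL-Complex_Analysis.Complex_Analysis"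
begin

definition R :: "nat \<Rightarrow> complex \<Rightarrow> complex" where
  "R n y = exp y - (\<Sum>k\<le>n. y ^ k / of_nat (fact k))"

definition derangement_poly :: "nat \<Rightarrow> complex \<Rightarrow> complex" where
  "derangement_poly n x = (-1) ^ n * (\<Sum>k\<le>n. of_nat (n choose k) * (-1) ^ k * of_nat (fact k) * x ^ k)"

end

(* On the segment from 0 to y we have |x t| <= |x y| < 1, so the integrand
   e^(-t) / (1 - x t) has two expansions converging uniformly there: the geometric series
   sum of x^n e^(-t) t^n, and the Cauchy product of e^(-t) with the geometric series, whose
   coefficients are d_n(x)/n!. Integrating termwise, with
   int_0^y e^(-t) t^n dt = n! e^(-y) R_n(y)  and  int_0^y t^n dt = y^(n+1)/(n+1),
   gives the two series. *)
theory Submission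
  imports Defs
begin

lemma exp_sums_of_nat_fact: "(\<lambda>n. z ^ n / of_nat (fact n)) sums exp (z :: complex)"
proof -
  have "(\<lambda>n. z ^ n /\<^sub>R fact n) = (\<lambda>n. z ^ n / of_nat (fact n))"
    by (auto simp: scaleR_conv_of_real field_simps)
  then show ?thesis
    using exp_converges[of z] by simp
qed

lemma has_field_derivative_power_Suc_div:
  "((\<lambda>t::complex. t ^ Suc n / c) has_field_derivative of_nat (Suc n) * t ^ n / c) (at t)"
  using DERIV_cdivide[OF DERIV_power_Suc[OF DERIV_ident[of "at t"]]] by simp

lemma has_field_derivative_exp_partial_sum:
  "((\<lambda>t::complex. \<Sum>k\<le>n. t ^ k / of_nat (fact k))
     has_field_derivative (\<Sum>k<n. t ^ k / of_nat (fact k))) (at t)"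
proof (induction n)
  case 0
  then show ?case by simp
next
  case (Suc n)
  have "((\<lambda>t::complex. t ^ Suc n / of_nat (fact (Suc n)))
          has_field_derivative of_nat (Suc n) * t ^ n / of_nat (fact (Suc n))) (at t)"
    by (rule has_field_derivative_power_Suc_div)
  also have "of_nat (Suc n) * t ^ n / of_nat (fact (Suc n)) = t ^ n / (of_nat (fact n) :: complex)"
    by (simp only: fact_Suc of_nat_mult) (simp del: of_nat_Suc)
  finally have "((\<lambda>t::complex. t ^ Suc n / of_nat (fact (Suc n)))
          has_field_derivative t ^ n / of_nat (fact n)) (at t)" .
  then show ?case
    unfolding sum.atMost_Suc sum.lessThan_Suc using DERIV_add[OF Suc] by simp
qed

lemma has_field_derivative_exp_minus_partial_sum:
  "((\<lambda>t::complex. - of_nat (fact n) * exp (- t) * (\<Sum>k\<le>n. t ^ k / of_nat (fact k)))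
     has_field_derivative exp (- t) * t ^ n) (at t)"
proof -
  have exp_minus: "((\<lambda>t::complex. exp (- t)) has_field_derivative - exp (- t)) (at t)"
    by (auto intro!: derivative_eq_intros)
  have "(\<Sum>k\<le>n. t ^ k / of_nat (fact k)) = (\<Sum>k<n. t ^ k / of_nat (fact k)) + t ^ n / of_nat (fact n)"
    by (simp add: lessThan_Suc_atMost[symmetric])
  then show ?thesis
    using DERIV_mult[OF DERIV_cmult[OF exp_minus, of "- of_nat (fact n)"]
                        has_field_derivative_exp_partial_sum[of n t]]
    by (simp add: algebra_simps)
qed

lemma has_contour_integral_exp_minus_mult_power:
  "((\<lambda>t. exp (- t) * t ^ n) has_contour_integral (of_nat (fact n) * exp (- y) * R n y)) (linepath 0 y)"
proof -
  define G where "G = (\<lambda>t::complex. - of_nat (fact n) * exp (- t) * (\<Sum>k\<le>n. t ^ k / of_nat (fact k)))"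
  have "((\<lambda>t. exp (- t) * t ^ n) has_contour_integral (G y - G 0)) (linepath 0 y)"
    using contour_integral_primitive[of UNIV G "\<lambda>t. exp (- t) * t ^ n" "linepath 0 y"]
    unfolding G_def by (simp only: has_field_derivative_exp_minus_partial_sum) simp
  moreover have "G 0 = - of_nat (fact n)"
    by (simp add: G_def zero_power sum.atMost_shift)
  ultimately show ?thesis
    by (simp add: G_def R_def exp_minus field_simps)
qed

lemma has_contour_integral_power_linepath:
  "((\<lambda>t. t ^ n) has_contour_integral ((b ^ Suc n - a ^ Suc n) / of_nat (Suc n))) (linepath a b)"
proof -
  have "((\<lambda>t::complex. t ^ Suc n / of_nat (Suc n)) has_field_derivative t ^ n) (at t)" for t
    using has_field_derivative_power_Suc_div[of n "of_nat (Suc n)" t] by (simp del: of_nat_Suc)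
  from contour_integral_primitive[of UNIV _ _ "linepath a b", OF this]
  show ?thesis by (simp add: diff_divide_distrib)
qed

lemma derangement_poly_div_fact:
  "derangement_poly m x / of_nat (fact m) = (\<Sum>j\<le>m. (-1) ^ j / of_nat (fact j) * x ^ (m - j))"
proof -
  have "derangement_poly m x / of_nat (fact m) =
     (\<Sum>k\<le>m. (-1) ^ m * of_nat (m choose k) * (-1) ^ k * of_nat (fact k) * x ^ k / of_nat (fact m))"
    by (simp add: derangement_poly_def sum_distrib_left sum_divide_distrib algebra_simps)
  also have "\<dots> = (\<Sum>k\<le>m. (-1) ^ (m - k) / of_nat (fact (m - k)) * x ^ k)"
  proof (rule sum.cong[OF refl])
    fix k assume "k \<in> {..m}"
    then obtain d where m: "m = k + d" by (auto simp: le_iff_add)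
    have "fact k * fact d * (m choose k) = fact m"
      using binomial_fact_lemma[of k m] m by simp
    then have "(of_nat (fact k) * of_nat (fact d) * of_nat (m choose k) :: complex) = of_nat (fact m)"
      by (metis of_nat_mult)
    then have binom: "of_nat (fact k) * of_nat (m choose k) / of_nat (fact m) = (1 / of_nat (fact d) :: complex)"
      by (simp add: field_simps)
    have sign: "(-1::complex) ^ m * (-1) ^ k = (-1) ^ d"
      unfolding m by (simp add: power_add)
    have "(-1) ^ m * of_nat (m choose k) * (-1) ^ k * of_nat (fact k) * x ^ k / of_nat (fact m)
       = ((-1::complex) ^ m * (-1) ^ k) * (of_nat (fact k) * of_nat (m choose k) / of_nat (fact m)) * x ^ k"
      by (simp add: algebra_simps)
    also have "\<dots> = (-1) ^ (m - k) / of_nat (fact (m - k)) * x ^ k"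
      using m binom sign by simp
    finally show "(-1) ^ m * of_nat (m choose k) * (-1) ^ k * of_nat (fact k) * x ^ k / of_nat (fact m)
      = (-1) ^ (m - k) / of_nat (fact (m - k)) * x ^ k" .
  qed
  also have "\<dots> = (\<Sum>j\<le>m. (-1) ^ j / of_nat (fact j) * x ^ (m - j))"
    by (rule sum.reindex_bij_witness[of _ "\<lambda>j. m - j" "\<lambda>j. m - j"]) auto
  finally show ?thesis .
qed

lemma derangement_poly_div_fact_mult_power:
  "derangement_poly m x / of_nat (fact m) * t ^ m
     = (\<Sum>j\<le>m. (- t) ^ j / of_nat (fact j) * (x * t) ^ (m - j))"
  unfolding derangement_poly_div_fact sum_distrib_right
proof (rule sum.cong[OF refl])
  fix j assume "j \<in> {..m}"
  then have "t ^ m = t ^ j * t ^ (m - j)"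
    by (simp add: power_add[symmetric])
  then show "(-1) ^ j / of_nat (fact j) * x ^ (m - j) * t ^ m = (- t) ^ j / of_nat (fact j) * (x * t) ^ (m - j)"
    by (simp add: power_minus' power_mult_distrib field_simps)
qed

lemma exp_minus_div_sums_powers:
  fixes x t :: complex
  assumes "norm (x * t) < 1"
  shows "(\<lambda>n. x ^ n * (exp (- t) * t ^ n)) sums (exp (- t) / (1 - x * t))"
  using sums_mult[OF geometric_sums[OF assms], of "exp (- t)"]
  by (simp add: power_mult_distrib mult_ac)

lemma derangement_poly_exponential_generating_function:
  fixes x t :: complex
  assumes "norm (x * t) < 1"
  shows "(\<lambda>m. derangement_poly m x / of_nat (fact m) * t ^ m) sums (exp (- t) / (1 - x * t))"
proof -
  have "summable (\<lambda>j. norm ((- t) ^ j / of_nat (fact j)))"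
    using summable_exp[of "norm t"] by (simp add: norm_divide norm_power field_simps)
  moreover have "summable (\<lambda>j. norm ((x * t) ^ j))"
    using assms by (simp add: norm_power summable_geometric)
  ultimately have "(\<lambda>m. \<Sum>j\<le>m. (- t) ^ j / of_nat (fact j) * (x * t) ^ (m - j))
      sums ((\<Sum>j. (- t) ^ j / of_nat (fact j)) * (\<Sum>j. (x * t) ^ j))"
    by (rule Cauchy_product_sums)
  moreover have "(\<Sum>j. (- t) ^ j / of_nat (fact j)) = exp (- t)"
    using exp_sums_of_nat_fact by (simp add: sums_iff)
  moreover have "(\<Sum>j. (x * t) ^ j) = 1 / (1 - x * t)"
    using geometric_sums[OF assms] by (simp add: sums_iff)
  ultimately show ?thesis
    unfolding derangement_poly_div_fact_mult_power by simp
qed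

lemma norm_le_of_in_closed_segment_0:
  "t \<in> closed_segment 0 y \<Longrightarrow> norm t \<le> norm y"
  using segment_bound1[of t 0 y] by simp

lemma norm_mult_le_of_in_closed_segment_0:
  fixes x y :: "'a::real_normed_field"
  shows "t \<in> closed_segment 0 y \<Longrightarrow> norm (x * t) \<le> norm (x * y)"
  by (simp add: norm_mult mult_left_mono norm_le_of_in_closed_segment_0)

lemma has_contour_integral_linepath_series:
  fixes g :: "nat \<Rightarrow> complex \<Rightarrow> complex" and M :: "nat \<Rightarrow> real"
  assumes integral: "\<And>n. (g n has_contour_integral J n) (linepath a b)"
    and bound: "\<And>n t. t \<in> closed_segment a b \<Longrightarrow> norm (g n t) \<le> M n" and "summable M"
    and sums_f: "\<And>t. t \<in> closed_segment a b \<Longrightarrow> (\<lambda>n. g n t) sums f t"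
  shows "f contour_integrable_on linepath a b" "J sums contour_integral (linepath a b) f"
proof -
  have uniform: "uniform_limit (path_image (linepath a b)) (\<lambda>n t. \<Sum>i<n. g i t) (\<lambda>t. \<Sum>i. g i t) sequentially"
    using bound \<open>summable M\<close> by (intro Weierstrass_m_test) auto
  have partial: "((\<lambda>t. \<Sum>i<n. g i t) has_contour_integral (\<Sum>i<n. J i)) (linepath a b)" for n
    by (rule has_contour_integral_sum) (auto intro: integral)
  then have "\<forall>\<^sub>F n in sequentially. (\<lambda>t. \<Sum>i<n. g i t) contour_integrable_on linepath a b"
    by (intro always_eventually) (auto simp: contour_integrable_on_def)
  note limit = contour_integral_uniform_limit[OF this uniform, of "norm (b - a)", simplified]
  have suminf_eq: "(\<Sum>i. g i t) = f t" if "t \<in> path_image (linepath a b)" for t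
    using sums_f that by (simp add: sums_iff)
  show "f contour_integrable_on linepath a b"
    using contour_integrable_eq[OF limit(1) suminf_eq] .
  show "J sums contour_integral (linepath a b) f"
  proof -
    have "contour_integral (linepath a b) (\<lambda>t. \<Sum>i. g i t) = contour_integral (linepath a b) f"
      by (rule contour_integral_eq) (rule suminf_eq)
    then show ?thesis
      using limit(2) contour_integral_unique[OF partial] by (simp add: sums_def)
  qed
qed

lemma fact_R_series_sums_contour_integral:
  fixes x y :: complex
  assumes "norm (x * y) < 1"
  shows "(\<lambda>t. exp (- t) / (1 - x * t)) contour_integrable_on linepath 0 y"
    "(\<lambda>n. of_nat (fact n) * R n y * x ^ n)
       sums (exp y * contour_integral (linepath 0 y) (\<lambda>t. exp (- t) / (1 - x * t)))"
proof -
  let ?g = "\<lambda>n t. x ^ n * (exp (- t) * t ^ n)"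
  let ?J = "\<lambda>n. x ^ n * (of_nat (fact n) * exp (- y) * R n y)"
  have xt: "norm (x * t) \<le> norm (x * y)" if "t \<in> closed_segment 0 y" for t
    using that by (rule norm_mult_le_of_in_closed_segment_0)
  have bound: "norm (?g n t) \<le> exp (norm y) * norm (x * y) ^ n" if "t \<in> closed_segment 0 y" for n t
  proof -
    have "norm (exp (- t)) \<le> exp (norm y)"
      using norm_exp[of "- t"] norm_le_of_in_closed_segment_0[OF that] by simp
    moreover have "norm (?g n t) = norm (exp (- t)) * norm (x * t) ^ n"
      by (simp add: norm_mult norm_power power_mult_distrib)
    ultimately show ?thesis
      using xt[OF that] by (simp add: mult_mono power_mono)
  qed
  have summable: "summable (\<lambda>n. exp (norm y) * norm (x * y) ^ n)"
    using assms by (intro summable_mult summable_geometric) auto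
  have "(\<lambda>n. ?g n t) sums (exp (- t) / (1 - x * t))" if "t \<in> closed_segment 0 y" for t
    using xt[OF that] assms by (intro exp_minus_div_sums_powers) simp
  note series = has_contour_integral_linepath_series[where g = ?g and J = ?J,
      OF has_contour_integral_lmul[OF has_contour_integral_exp_minus_mult_power] bound summable this]
  then show "(\<lambda>t. exp (- t) / (1 - x * t)) contour_integrable_on linepath 0 y"
    "(\<lambda>n. of_nat (fact n) * R n y * x ^ n)
       sums (exp y * contour_integral (linepath 0 y) (\<lambda>t. exp (- t) / (1 - x * t)))"
    using series sums_mult[OF series(2), of "exp y"] by (auto simp: exp_minus field_simps)
qed

lemma derangement_series_sums_contour_integral:
  fixes x y :: complex
  assumes "norm (x * y) < 1"
  shows "(\<lambda>n. derangement_poly n x * y ^ (n + 1) / of_nat (fact (n + 1)))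
           sums contour_integral (linepath 0 y) (\<lambda>t. exp (- t) / (1 - x * t))"
proof -
  let ?g = "\<lambda>m t. derangement_poly m x / of_nat (fact m) * t ^ m"
  let ?M = "\<lambda>m. \<Sum>j\<le>m. norm y ^ j / fact j * norm (x * y) ^ (m - j)"
  have integral: "(?g m has_contour_integral derangement_poly m x * y ^ (m + 1) / of_nat (fact (m + 1)))
      (linepath 0 y)" for m
    using has_contour_integral_lmul[OF has_contour_integral_power_linepath[of m y 0],
        of "derangement_poly m x / of_nat (fact m)"]
    by (simp add: field_simps)
  have bound: "norm (?g m t) \<le> ?M m" if t: "t \<in> closed_segment 0 y" for m t
    unfolding derangement_poly_div_fact_mult_power
  proof (rule sum_norm_le)
    fix j
    have "norm ((- t) ^ j / of_nat (fact j) * (x * t) ^ (m - j))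
        = norm t ^ j / fact j * norm (x * t) ^ (m - j)"
      by (simp add: norm_mult norm_divide norm_power)
    also have "\<dots> \<le> norm y ^ j / fact j * norm (x * y) ^ (m - j)"
      using norm_le_of_in_closed_segment_0[OF t] norm_mult_le_of_in_closed_segment_0[OF t]
      by (intro mult_mono power_mono divide_right_mono) auto
    finally show "norm ((- t) ^ j / of_nat (fact j) * (x * t) ^ (m - j))
        \<le> norm y ^ j / fact j * norm (x * y) ^ (m - j)" .
  qed
  have "summable (\<lambda>j. norm (norm y ^ j / fact j))"
    using summable_exp[of "norm y"] by (simp add: field_simps)
  moreover have "summable (\<lambda>j. norm (norm (x * y) ^ j))"
    using assms by (simp add: summable_geometric)
  ultimately have summable: "summable ?M"
    by (rule summable_Cauchy_product)
  have "(\<lambda>m. ?g m t) sums (exp (- t) / (1 - x * t))" if "t \<in> closed_segment 0 y" for t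
    using norm_mult_le_of_in_closed_segment_0[OF that, of x] assms
    by (intro derangement_poly_exponential_generating_function) simp
  from has_contour_integral_linepath_series(2)[OF integral bound summable this]
  show ?thesis .
qed

theorem mainTheorem12:
  fixes x y :: complex
  assumes "norm (x * y) < 1"
  shows "\<exists>I. ((\<lambda>t. exp (- t) / (1 - x * t)) has_contour_integral I) (linepath 0 y)
           \<and> (\<lambda>n. of_nat (fact n) * R n y * x ^ n) sums (exp y * I)
           \<and> (\<lambda>n. derangement_poly n x * y ^ (n + 1) / of_nat (fact (n + 1))) sums I"
  using has_contour_integral_integral fact_R_series_sums_contour_integral[OF assms]
    derangement_series_sums_contour_integral[OF assms]
  by blast

end
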